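(* Let $\mathbf{G}$ be a group (possibly non-commutative) with identity $1_{\mathbf{G}}$, and let $f:W\to\mathbf{G}$ be a $\mathbf{G}$-valued reciprocity function. For $(p,q)\in W$, choose integers $a_0,\dots,a_n$ ($n\ge 0$) with $$q=Q^{(n)}(a_0,\dots,a_n),\qquad p=P^{(n)}(a_0,\dots,a_n),$$ for $i=1,\dots,n$ put $q_i:=Q^{(n-i)}(a_i,\dots,a_n)$, $p_i:=P^{(n-i)}(a_i,\dots,a_n)$, and define $$\mathcal{D}(p,q):=f(p_1,q_1)^{-1}f(p_2,q_2)^{-1}\cdots f(p_n,q_n)^{-1}\in\mathbf{G}$$ (the empty product, for $n=0$, being $1_{\mathbf{G}}$). Then: (i) $\mathcal{D}(p,q)$ depends only on $(p,q)$ and not on the choice of the sequence $(a_0,\dots,a_n)$; (ii) the function $\mathcal{D}:W\to\mathbf{G}$ thus defined is a generalized $\mathbf{G}$-valued Dedekind symbol with reciprocity function $f$.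
   Context: $W:=\{(p,q)\in\mathbb{Z}\times\mathbb{Z} : \gcd(p,q)=1\}$. A $\mathbf{G}$-valued reciprocity function is a map $f:W\to\mathbf{G}$ such that for all relevant $(p,q)$: $f(p,-q)=f(-p,q)$; $f(p,q)f(-q,p)=1_{\mathbf{G}}$; and $f(p,p+q)f(p+q,q)=f(p,q)$. Given such $f$, a generalized $\mathbf{G}$-valued Dedekind symbol with reciprocity function $f$ is a map $\mathcal{D}:W\to\mathbf{G}$ such that $\mathcal{D}(p,q)=\mathcal{D}(p,q+p)$, $\mathcal{D}(p,-q)=\mathcal{D}(-p,q)$, and $\mathcal{D}(p,q)\mathcal{D}(q,-p)^{-1}=f(p,q)$ for all $(p,q)\in W$. The polynomials $Q^{(n)},P^{(n)}\in\mathbb{Z}[A_0,\dots,A_n]$ in commuting variables are defined inductively by $Q^{(0)}(A_0)=A_0$, $P^{(0)}(A_0)=1$, and $Q^{(n+1)}(A_0,\dots,A_{n+1})=A_0Q^{(n)}(A_1,\dots,A_{n+1})-P^{(n)}(A_1,\dots,A_{n+1})$, $P^{(n+1)}(A_0,\dots,A_{n+1})=Q^{(n)}(A_1,\dots,A_{n+1})$; thus $Q^{(n)}/P^{(n)}$ is the continued fraction $A_0-\cfrac{1}{A_1-\cfrac{1}{\ddots-\cfrac{1}{A_n}}}$. The paper assumes every $(p,q)\in W$ admits such a presentation $(a_0,\dots,a_n)$. *)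

theory Defs
  imports Main
begin

definition W :: "(int \<times> int) set" where
  "W = {(p, q). gcd p q = 1}"

text \<open>Continuant polynomials Q^(n), P^(n) evaluated at a list [a_0,...,a_n] (n = length - 1).
  The recursion is the paper's; the value at the empty list (1,0) is only an auxiliary
  seed making Q [a] = a, P [a] = 1 hold; the statement only uses nonempty lists.\<close>
fun QP :: "int list \<Rightarrow> int \<times> int" where
  "QP [] = (1, 0)"
| "QP (a # as) = (a * fst (QP as) - snd (QP as), fst (QP as))"

definition Qc :: "int list \<Rightarrow> int" where "Qc as = fst (QP as)"
definition Pc :: "int list \<Rightarrow> int" where "Pc as = snd (QP as)"

text \<open>Reciprocity function (group written additively: product = +, inverse = uminus, 1 = 0).\<close>
definition reciprocity_function :: "(int \<Rightarrow> int \<Rightarrow> 'g::group_add) \<Rightarrow> bool" where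
  "reciprocity_function f \<longleftrightarrow>
     (\<forall>(p, q)\<in>W. f p (-q) = f (-p) q \<and> f p q + f (-q) p = 0 \<and>
                  f p (p + q) + f (p + q) q = f p q)"

definition dedekind_symbol :: "(int \<Rightarrow> int \<Rightarrow> 'g::group_add) \<Rightarrow> (int \<Rightarrow> int \<Rightarrow> 'g) \<Rightarrow> bool" where
  "dedekind_symbol f D \<longleftrightarrow>
     (\<forall>(p, q)\<in>W. D p q = D p (q + p) \<and> D p (-q) = D (-p) q \<and> D p q + - D q (-p) = f p q)"

text \<open>For a presentation as = [a_0,...,a_n]: f(p_1,q_1)^{-1} ... f(p_n,q_n)^{-1},
  where (p_i,q_i) = (P,Q)(a_i,...,a_n) = (Pc, Qc) (drop i as).\<close>
definition Dlist :: "(int \<Rightarrow> int \<Rightarrow> 'g::group_add) \<Rightarrow> int list \<Rightarrow> 'g" where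
  "Dlist f as = sum_list (map (\<lambda>i. - f (Pc (drop i as)) (Qc (drop i as))) [1..<length as])"

end

theory Submission
  imports Defs
begin

text \<open>The symbol is computed directly by the Euclidean algorithm,
  D(p, q) = f(p, q mod p) + D(q mod p, -p), which makes it q-periodic with period p
  by construction. The reciprocity law D(p, q) - D(q, -p) = f(p, q) is proved by
  induction on |p| + |q|: it is invariant under the rotation (p, q) \<mapsto> (q, -p),
  so one may assume 0 < p and -p \<le> q < p, where it is either the defining recursion
  or, for q < 0, the three-term relation of f at (p, q) combined with the law at the
  smaller pair (p + q, q). Peeling off a_0 from a presentation replaces (p, q) by
  (q, a_0 q - p), so the list product telescopes to D(p, q) by the reciprocity law;
  in particular it does not depend on the presentation.\<close>

lemma reciprocity_inverse:
  assumes "reciprocity_function f" and "gcd p q = 1"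
  shows "f p q + f (-q) p = 0"
  using assms by (auto simp: reciprocity_function_def W_def)

lemma reciprocity_add:
  assumes "reciprocity_function f" and "gcd p q = 1"
  shows "f p (p + q) + f (p + q) q = f p q"
  using assms by (auto simp: reciprocity_function_def W_def)

lemma reciprocity_uminus:
  assumes f: "reciprocity_function f" and coprime: "gcd p q = 1"
  shows "f (-p) (-q) = f p q"
proof -
  have "f p q = - f (-q) p"
    using reciprocity_inverse[OF f coprime] by (simp add: eq_neg_iff_add_eq_0)
  moreover have "f (-q) p + f (-p) (-q) = 0"
    using reciprocity_inverse[OF f, of "-q" p] coprime by (simp add: gcd.commute)
  ultimately show ?thesis by (simp add: minus_unique)
qed

text \<open>The value on the column p = 0 is forced by D(1, a) = 0 (the empty product).\<close>
function dedekind_euclid :: "(int \<Rightarrow> int \<Rightarrow> 'g::group_add) \<Rightarrow> int \<Rightarrow> int \<Rightarrow> 'g" where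
  "dedekind_euclid f p q =
     (if p = 0 then - f 1 0 else f p (q mod p) + dedekind_euclid f (q mod p) (-p))"
  by auto
termination
  by (relation "measure (\<lambda>(f, p, q). nat \<bar>p\<bar>)") (auto simp: abs_mod_less)

declare dedekind_euclid.simps[simp del]

lemma dedekind_euclid_zero [simp]: "dedekind_euclid f 0 q = - f 1 0"
  by (simp add: dedekind_euclid.simps)

lemma dedekind_euclid_step:
  "p \<noteq> 0 \<Longrightarrow> dedekind_euclid f p q = f p (q mod p) + dedekind_euclid f (q mod p) (-p)"
  by (simp add: dedekind_euclid.simps)

lemma dedekind_euclid_mod_cong:
  "q mod p = q' mod p \<Longrightarrow> dedekind_euclid f p q = dedekind_euclid f p q'"
  by (cases "p = 0") (simp_all add: dedekind_euclid_step)

lemma dedekind_euclid_add_period: "dedekind_euclid f p (q + p) = dedekind_euclid f p q"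
  by (rule dedekind_euclid_mod_cong) simp

lemma dedekind_euclid_one [simp]: "dedekind_euclid f 1 q = 0"
  by (simp add: dedekind_euclid_step)

lemma dedekind_euclid_uminus:
  assumes f: "reciprocity_function f"
  shows "gcd p q = 1 \<Longrightarrow> dedekind_euclid f (-p) (-q) = dedekind_euclid f p q"
proof (induction "nat \<bar>p\<bar>" arbitrary: p q rule: less_induct)
  case less
  show ?case
  proof (cases "p = 0")
    case False
    have smaller: "nat \<bar>q mod p\<bar> < nat \<bar>p\<bar>"
      using False abs_mod_less[of p q] by linarith
    have coprime: "gcd p (q mod p) = 1"
      using less.prems gcd_red_int[of q p] by (simp add: gcd.commute)
    have "dedekind_euclid f (- (q mod p)) p = dedekind_euclid f (q mod p) (-p)"
      using less.hyps[OF smaller, of "-p"] coprime by (simp add: gcd.commute)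
    then show ?thesis
      using False reciprocity_uminus[OF f coprime] by (simp add: dedekind_euclid_step)
  qed simp
qed

definition reciprocity_at :: "(int \<Rightarrow> int \<Rightarrow> 'g::group_add) \<Rightarrow> int \<Rightarrow> int \<Rightarrow> bool" where
  "reciprocity_at f p q \<longleftrightarrow> dedekind_euclid f p q = f p q + dedekind_euclid f q (-p)"

lemma reciprocity_at_rotate:
  assumes f: "reciprocity_function f" and coprime: "gcd p q = 1"
    and law: "reciprocity_at f p q"
  shows "reciprocity_at f q (-p)"
proof -
  have "f q (-p) + f p q = 0"
    using reciprocity_inverse[OF f, of q "-p"] coprime by (simp add: gcd.commute)
  then have "f q (-p) + (f p q + dedekind_euclid f q (-p)) = dedekind_euclid f q (-p)"
    by (simp add: add.assoc[symmetric])
  then show ?thesis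
    using law dedekind_euclid_uminus[OF f coprime] by (simp add: reciprocity_at_def)
qed

text \<open>The rotation has order four, so the law at any point of the orbit gives it at (p, q).\<close>
lemma reciprocity_at_from_orbit:
  assumes f: "reciprocity_function f" and coprime: "gcd p q = 1"
    and orbit: "(p', q') \<in> {(p, q), (q, -p), (-p, -q), (-q, p)}"
    and law: "reciprocity_at f p' q'"
  shows "reciprocity_at f p q"
proof -
  have coprime': "gcd q (-p) = 1" "gcd (-p) (-q) = 1" "gcd (-q) p = 1"
    using coprime by (simp_all add: gcd.commute)
  note rotate = reciprocity_at_rotate[OF f]
  from orbit consider "(p', q') = (p, q)" | "(p', q') = (q, -p)"
    | "(p', q') = (-p, -q)" | "(p', q') = (-q, p)" by blast
  then show ?thesis
  proof cases
    case 2
    then show ?thesis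
      using law rotate[OF coprime'(1)] rotate[OF coprime'(2)] rotate[OF coprime'(3)] by simp
  next
    case 3
    then show ?thesis using law rotate[OF coprime'(2)] rotate[OF coprime'(3)] by simp
  next
    case 4
    then show ?thesis using law rotate[OF coprime'(3)] by simp
  qed (use law in simp)
qed

lemma orbit_normal_form:
  fixes p q :: int
  assumes "(p, q) \<noteq> (0, 0)"
  obtains p' q' where "(p', q') \<in> {(p, q), (q, -p), (-p, -q), (-q, p)}"
    and "0 < p'" and "-p' \<le> q'" and "q' < p'"
proof -
  have "(0 < p \<and> -p \<le> q \<and> q < p) \<or> (0 < q \<and> -q \<le> -p \<and> -p < q) \<or>
        (0 < -p \<and> p \<le> -q \<and> -q < -p) \<or> (0 < -q \<and> q \<le> p \<and> p < -q)"
    using assms by auto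
  then show ?thesis
    using that[of p q] that[of q "-p"] that[of "-p" "-q"] that[of "-q" p] by auto
qed

lemma reciprocity_at_normal:
  assumes f: "reciprocity_function f" and coprime: "gcd p q = 1"
    and normal: "0 < p" "-p \<le> q" "q < p"
    and smaller: "\<And>p' q'. \<bar>p'\<bar> + \<bar>q'\<bar> < \<bar>p\<bar> + \<bar>q\<bar> \<Longrightarrow> gcd p' q' = 1 \<Longrightarrow> reciprocity_at f p' q'"
  shows "reciprocity_at f p q"
proof (cases "0 \<le> q")
  case True
  then show ?thesis
    using normal by (simp add: reciprocity_at_def dedekind_euclid_step)
next
  case False
  have "(q + p) mod p = q + p"
    by (rule mod_pos_pos_trivial) (use False normal in linarith)+
  then have first_step: "dedekind_euclid f p (q + p)
      = f p (p + q) + dedekind_euclid f (p + q) (-p)"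
    using normal by (simp add: dedekind_euclid_step add.commute)
  have "dedekind_euclid f (p + q) (-p) = dedekind_euclid f (p + q) q"
    by (rule dedekind_euclid_mod_cong) (simp add: mod_add_self2[of "-p" "p + q", symmetric])
  also have "\<dots> = f (p + q) q + dedekind_euclid f q (-(p + q))"
    using smaller[of "p + q" q] False normal coprime by (simp add: reciprocity_at_def)
  also have "dedekind_euclid f q (-(p + q)) = dedekind_euclid f q (-p)"
    by (rule dedekind_euclid_mod_cong) (simp add: mod_add_self2[of "-p - q" q, symmetric])
  finally have "dedekind_euclid f p q
      = (f p (p + q) + f (p + q) q) + dedekind_euclid f q (-p)"
    using first_step dedekind_euclid_add_period[of f p q] by (simp add: add.assoc)
  then show ?thesis
    using reciprocity_add[OF f coprime] by (simp add: reciprocity_at_def)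
qed

theorem dedekind_euclid_reciprocity:
  assumes f: "reciprocity_function f"
  shows "gcd p q = 1 \<Longrightarrow> dedekind_euclid f p q = f p q + dedekind_euclid f q (-p)"
proof (induction "nat (\<bar>p\<bar> + \<bar>q\<bar>)" arbitrary: p q rule: less_induct)
  case less
  have "(p, q) \<noteq> (0, 0)" using less.prems by auto
  then obtain p' q' where orbit: "(p', q') \<in> {(p, q), (q, -p), (-p, -q), (-q, p)}"
    and normal: "0 < p'" "-p' \<le> q'" "q' < p'"
    by (rule orbit_normal_form)
  have coprime: "gcd p' q' = 1" and same_size: "\<bar>p'\<bar> + \<bar>q'\<bar> = \<bar>p\<bar> + \<bar>q\<bar>"
    using orbit less.prems by (auto simp: gcd.commute)
  have "reciprocity_at f a b" if "\<bar>a\<bar> + \<bar>b\<bar> < \<bar>p'\<bar> + \<bar>q'\<bar>" and "gcd a b = 1" for a b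
    using less.hyps[of a b] that same_size abs_ge_zero[of a] abs_ge_zero[of b]
    by (simp add: reciprocity_at_def)
  then have "reciprocity_at f p' q'"
    by (rule reciprocity_at_normal[OF f coprime normal])
  then show ?case
    using reciprocity_at_from_orbit[OF f less.prems orbit] by (simp add: reciprocity_at_def)
qed

lemma Qc_Cons: "Qc (a # as) = a * Qc as - Pc as"
  by (simp add: Qc_def Pc_def)

lemma Pc_Cons: "Pc (a # as) = Qc as"
  by (simp add: Qc_def Pc_def)

lemma gcd_Pc_Qc: "gcd (Pc as) (Qc as) = 1"
proof (induction as)
  case Nil
  show ?case by (simp add: Qc_def Pc_def)
next
  case (Cons a as)
  have "gcd (Qc as) (a * Qc as + - Pc as) = gcd (Qc as) (Pc as)"
    by (simp only: gcd_add_mult gcd_neg2)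
  then show ?case using Cons by (simp add: Qc_Cons Pc_Cons gcd.commute)
qed

lemma Dlist_Cons:
  assumes "as \<noteq> []"
  shows "Dlist f (a # as) = - f (Pc as) (Qc as) + Dlist f as"
proof -
  have "[1..<length (a # as)] = 1 # map Suc [1..<length as]"
    using assms
    by (metis One_nat_def length_Cons length_greater_0_conv map_Suc_upt not_less_eq upt_conv_Cons)
  then show ?thesis by (simp add: Dlist_def comp_def)
qed

lemma Dlist_eq_dedekind_euclid:
  assumes f: "reciprocity_function f"
  shows "as \<noteq> [] \<Longrightarrow> Dlist f as = dedekind_euclid f (Pc as) (Qc as)"
proof (induction as)
  case (Cons a as)
  show ?case
  proof (cases "as = []")
    case True
    then show ?thesis by (simp add: Dlist_def Qc_def Pc_def)
  next
    case False
    have "dedekind_euclid f (Pc (a # as)) (Qc (a # as)) = dedekind_euclid f (Qc as) (- Pc as)"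
      unfolding Qc_Cons Pc_Cons
      by (rule dedekind_euclid_mod_cong) (metis add.commute diff_conv_add_uminus mod_mult_self1)
    also have "\<dots> = - f (Pc as) (Qc as) + dedekind_euclid f (Pc as) (Qc as)"
      using dedekind_euclid_reciprocity[OF f gcd_Pc_Qc] by (simp add: add.assoc[symmetric])
    finally show ?thesis
      using Cons.IH False by (simp add: Dlist_Cons)
  qed
qed simp

lemma W_closed:
  assumes "(p, q) \<in> W"
  shows "(p, q + p) \<in> W" "(p, -q) \<in> W" "(-p, q) \<in> W" "(q, -p) \<in> W"
  using assms gcd_add_mult[of p 1 q] by (simp_all add: W_def gcd.commute add.commute)

lemma dedekind_symbol_cong:
  assumes "dedekind_symbol f D" and "\<And>p q. (p, q) \<in> W \<Longrightarrow> D' p q = D p q"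
  shows "dedekind_symbol f D'"
  unfolding dedekind_symbol_def
proof clarify
  fix p q
  assume w: "(p, q) \<in> W"
  then have "D p q = D p (q + p) \<and> D p (- q) = D (- p) q \<and> D p q + - D q (- p) = f p q"
    using assms(1) by (auto simp: dedekind_symbol_def)
  moreover have "D' p q = D p q" "D' p (q + p) = D p (q + p)" "D' p (- q) = D p (- q)"
    "D' (- p) q = D (- p) q" "D' q (- p) = D q (- p)"
    using w W_closed[OF w] by (simp_all add: assms(2))
  ultimately show "D' p q = D' p (q + p) \<and> D' p (- q) = D' (- p) q \<and> D' p q + - D' q (- p) = f p q"
    by argo
qed

lemma dedekind_symbol_dedekind_euclid:
  assumes f: "reciprocity_function f"
  shows "dedekind_symbol f (dedekind_euclid f)"
  unfolding dedekind_symbol_def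
proof (clarify, intro conjI)
  fix p q
  assume "(p, q) \<in> W"
  then have coprime: "gcd p q = 1" "gcd (-p) q = 1" by (simp_all add: W_def)
  show "dedekind_euclid f p q = dedekind_euclid f p (q + p)"
    by (simp add: dedekind_euclid_add_period)
  show "dedekind_euclid f p (- q) = dedekind_euclid f (- p) q"
    using dedekind_euclid_uminus[OF f coprime(2)] by simp
  show "dedekind_euclid f p q + - dedekind_euclid f q (- p) = f p q"
    using dedekind_euclid_reciprocity[OF f coprime(1)] by (simp add: add.assoc)
qed

theorem theorem1p8:
  fixes f :: "int \<Rightarrow> int \<Rightarrow> 'g::group_add"
  assumes recip: "reciprocity_function f"
    and presentation: "\<forall>(p, q)\<in>W. \<exists>as. as \<noteq> [] \<and> Qc as = q \<and> Pc as = p"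
  shows "(\<forall>as bs. as \<noteq> [] \<and> bs \<noteq> [] \<and> Qc as = Qc bs \<and> Pc as = Pc bs
                    \<longrightarrow> Dlist f as = Dlist f bs)
     \<and> dedekind_symbol f (\<lambda>p q. Dlist f (SOME as. as \<noteq> [] \<and> Qc as = q \<and> Pc as = p))"
proof
  show "\<forall>as bs. as \<noteq> [] \<and> bs \<noteq> [] \<and> Qc as = Qc bs \<and> Pc as = Pc bs
                    \<longrightarrow> Dlist f as = Dlist f bs"
    using Dlist_eq_dedekind_euclid[OF recip] by auto
  show "dedekind_symbol f (\<lambda>p q. Dlist f (SOME as. as \<noteq> [] \<and> Qc as = q \<and> Pc as = p))"
  proof (rule dedekind_symbol_cong[OF dedekind_symbol_dedekind_euclid[OF recip]])
    fix p q
    assume "(p, q) \<in> W"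
    then have "\<exists>as. as \<noteq> [] \<and> Qc as = q \<and> Pc as = p"
      using presentation by auto
    then show "Dlist f (SOME as. as \<noteq> [] \<and> Qc as = q \<and> Pc as = p) = dedekind_euclid f p q"
      by (metis (mono_tags, lifting) someI_ex Dlist_eq_dedekind_euclid[OF recip])
  qed
qed

end
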